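(* Let $n\ge2$, let $v\in C^0(\mathbb R^n)$ be quasi-concave, and suppose $v\in C^\infty(U)$ for some domain $U\subset\mathbb R^n$. Then at every point of $U$, $$2\big[|D^2v\,Dv|^2-\Delta v\,\Delta_\infty v\big]\ \ge\ |Dv|^2\big[|D^2v|^2-(\Delta v)^2\big],$$ where $\Delta_\infty v=\langle D^2v\,Dv,Dv\rangle$ and $|D^2v|$ is the Frobenius norm.
   Context: A function $f\in C^0(\mathbb R^n)$ is quasi-concave if $f(\lambda x+(1-\lambda)y)\ge\min\{f(x),f(y)\}$ for all $x,y\in\mathbb R^n$, $\lambda\in[0,1]$; equivalently, every nonempty super level set $\{f>t\}$ is convex. *)

theory Defs
  imports "HOL-Analysis.Analysis"
begin

definition quasi_concave :: "(real^'n \<Rightarrow> real) \<Rightarrow> bool" where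
  "quasi_concave f \<longleftrightarrow>
     (\<forall>x y. \<forall>l::real. 0 \<le> l \<and> l \<le> 1 \<longrightarrow> f (l *\<^sub>R x + (1 - l) *\<^sub>R y) \<ge> min (f x) (f y))"

definition pd :: "'n \<Rightarrow> (real^'n \<Rightarrow> real) \<Rightarrow> real^'n \<Rightarrow> real" where
  "pd i f x = deriv (\<lambda>t. f (x + t *\<^sub>R axis i 1)) 0"

fun Ck_on :: "nat \<Rightarrow> (real^'n) set \<Rightarrow> (real^'n \<Rightarrow> real) \<Rightarrow> bool" where
  "Ck_on 0 U f = continuous_on U f"
| "Ck_on (Suc k) U f = (f differentiable_on U \<and> (\<forall>i. Ck_on k U (pd i f)))"

definition smooth_on :: "(real^'n) set \<Rightarrow> (real^'n \<Rightarrow> real) \<Rightarrow> bool" where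
  "smooth_on U f \<longleftrightarrow> (\<forall>k. Ck_on k U f)"

definition grad :: "(real^'n \<Rightarrow> real) \<Rightarrow> real^'n \<Rightarrow> real^'n" where
  "grad f x = (\<chi> i. pd i f x)"

definition hess :: "(real^'n \<Rightarrow> real) \<Rightarrow> real^'n \<Rightarrow> real^'n^'n" where
  "hess f x = (\<chi> i j. pd j (pd i f) x)"

definition laplacian :: "(real^'n \<Rightarrow> real) \<Rightarrow> real^'n \<Rightarrow> real" where
  "laplacian f x = (\<Sum>i\<in>UNIV. hess f x $ i $ i)"

definition inf_laplacian :: "(real^'n \<Rightarrow> real) \<Rightarrow> real^'n \<Rightarrow> real" where
  "inf_laplacian f x = (hess f x *v grad f x) \<bullet> grad f x"

definition frob_norm_sq :: "real^'n^'n \<Rightarrow> real" where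
  "frob_norm_sq A = (\<Sum>i\<in>UNIV. \<Sum>j\<in>UNIV. (A $ i $ j)\<^sup>2)"

end

theory Submission
  imports Defs
begin

text \<open>Quasi-concavity forces the Hessian \<open>A = D\<^sup>2v(x)\<close> to be negative semidefinite on the
  hyperplane orthogonal to \<open>p = Dv(x)\<close>: otherwise \<open>v\<close> would have a strict local minimum at \<open>x\<close>
  along a line in that hyperplane, and the midpoint inequality fails. For such a symmetric \<open>A\<close>
  the compressed matrix \<open>M = P A P\<close>, with \<open>P = |p|\<^sup>2 I - p p\<^sup>T\<close>, satisfies
  \<open>M\<^sub>i\<^sub>j\<^sup>2 \<le> M\<^sub>i\<^sub>i M\<^sub>j\<^sub>j\<close> by Cauchy-Schwarz, hence \<open>|M|\<^sup>2 \<le> (tr M)\<^sup>2\<close>. Expressing \<open>|M|\<^sup>2\<close> and \<open>tr M\<close>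
  through \<open>|A|\<^sup>2\<close>, \<open>tr A\<close>, \<open>|Ap|\<^sup>2\<close> and \<open>\<langle>Ap, p\<rangle>\<close> and dividing by \<open>|p|\<^sup>6\<close> gives the inequality.
  Symmetry of the Hessian is Schwarz's theorem, obtained from second differences.\<close>

lemma has_derivative_along_line:
  fixes f :: "'a::real_normed_vector \<Rightarrow> real"
  assumes "(f has_derivative D) (at (y + t *\<^sub>R w))"
  shows "((\<lambda>s. f (y + s *\<^sub>R w)) has_real_derivative D w) (at t)"
proof -
  have "((\<lambda>s. y + s *\<^sub>R w) has_derivative (\<lambda>s. s *\<^sub>R w)) (at t)"
    by (auto intro!: derivative_eq_intros)
  from diff_chain_at[OF this assms]
  show ?thesis
    using has_derivative_linear[OF assms]
    by (simp add: o_def has_field_derivative_def linear_scale mult.commute[of _ "D w"])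
qed

lemma pd_eq_derivative:
  fixes f :: "real^'n \<Rightarrow> real"
  assumes "(f has_derivative D) (at y)"
  shows "pd i f y = D (axis i 1)"
  using has_derivative_along_line[of f D y 0 "axis i 1"] assms
  unfolding pd_def by (simp add: DERIV_imp_deriv)

lemma has_derivative_grad:
  fixes f :: "real^'n \<Rightarrow> real"
  assumes "f differentiable (at y)"
  shows "(f has_derivative (\<lambda>h. grad f y \<bullet> h)) (at y)"
proof -
  obtain D where D: "(f has_derivative D) (at y)" using assms differentiable_def by blast
  have "D h = grad f y \<bullet> h" for h
  proof -
    have "D h = D (\<Sum>k\<in>UNIV. h$k *\<^sub>R axis k 1)"
      using basis_expansion[of h] by (simp add: scalar_mult_eq_scaleR)
    also have "\<dots> = (\<Sum>k\<in>UNIV. h$k * D (axis k 1))"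
      using has_derivative_linear[OF D] by (simp add: linear_sum linear_scale)
    finally show ?thesis
      by (simp add: pd_eq_derivative[OF D] grad_def inner_vec_def mult.commute)
  qed
  with D show ?thesis by (metis ext)
qed

lemma has_real_derivative_along_line_grad:
  fixes f :: "real^'n \<Rightarrow> real"
  assumes "f differentiable (at (y + t *\<^sub>R w))"
  shows "((\<lambda>s. f (y + s *\<^sub>R w)) has_real_derivative grad f (y + t *\<^sub>R w) \<bullet> w) (at t)"
  using has_derivative_along_line has_derivative_grad[OF assms] by blast

lemma has_real_derivative_along_axis:
  fixes f :: "real^'n \<Rightarrow> real"
  assumes "f differentiable (at (y + t *\<^sub>R axis i 1))"
  shows "((\<lambda>s. f (y + s *\<^sub>R axis i 1)) has_real_derivative pd i f (y + t *\<^sub>R axis i 1)) (at t)"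
  using has_real_derivative_along_line_grad[OF assms] by (simp add: grad_def inner_axis)

lemma linear_approximation_two_points:
  fixes g :: "'a::real_normed_vector \<Rightarrow> real"
  assumes approx: "\<And>z. norm z < d \<Longrightarrow> \<bar>g (x + z) - g x - L z\<bar> \<le> e * norm z"
    and "linear L" "norm z1 < d" "norm z2 < d"
  shows "\<bar>g (x + z1) - g (x + z2) - L (z1 - z2)\<bar> \<le> e * (norm z1 + norm z2)"
proof -
  have "\<bar>g (x + z1) - g (x + z2) - L (z1 - z2)\<bar>
      = \<bar>(g (x + z1) - g x - L z1) - (g (x + z2) - g x - L z2)\<bar>"
    using linear_diff[OF \<open>linear L\<close>] by simp
  also have "\<dots> \<le> \<bar>g (x + z1) - g x - L z1\<bar> + \<bar>g (x + z2) - g x - L z2\<bar>"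
    by (rule abs_triangle_ineq4)
  also have "\<dots> \<le> e * norm z1 + e * norm z2"
    using assms by (intro add_mono approx)
  finally show ?thesis by (simp add: distrib_left)
qed

definition second_difference :: "('a::real_vector \<Rightarrow> real) \<Rightarrow> 'a \<Rightarrow> 'a \<Rightarrow> 'a \<Rightarrow> real" where
  "second_difference f x u w = f (x + u + w) - f (x + u) - f (x + w) + f x"

lemma second_difference_commute: "second_difference f x u w = second_difference f x w u"
  unfolding second_difference_def by (simp add: add_ac)

lemma second_difference_mvt:
  fixes f :: "real^'n \<Rightarrow> real"
  assumes df: "\<forall>y\<in>ball x r. f differentiable (at y)" and h: "0 < h" "2 * h < r"
  shows "\<exists>\<xi>. 0 < \<xi> \<and> \<xi> < h \<and> second_difference f x (h *\<^sub>R axis i 1) (h *\<^sub>R axis j 1)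
           = h * (pd i f (x + (h *\<^sub>R axis j 1 + \<xi> *\<^sub>R axis i 1)) - pd i f (x + \<xi> *\<^sub>R axis i 1))"
proof -
  let ?ei = "axis i 1 :: real^'n" and ?ej = "axis j 1 :: real^'n"
  define \<phi> where "\<phi> s = f (x + h *\<^sub>R ?ej + s *\<^sub>R ?ei) - f (x + s *\<^sub>R ?ei)" for s
  define \<phi>' where "\<phi>' s = pd i f (x + h *\<^sub>R ?ej + s *\<^sub>R ?ei) - pd i f (x + s *\<^sub>R ?ei)" for s
  have "(\<phi> has_real_derivative \<phi>' s) (at s)" if "0 \<le> s" "s \<le> h" for s
  proof -
    have "norm (h *\<^sub>R ?ej + s *\<^sub>R ?ei) \<le> h + s"
      using norm_triangle_ineq[of "h *\<^sub>R ?ej" "s *\<^sub>R ?ei"] h that by simp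
    moreover have "x + z \<in> ball x r" if "norm z < r" for z
      using that by (simp add: dist_norm norm_minus_commute)
    ultimately have "x + (h *\<^sub>R ?ej + s *\<^sub>R ?ei) \<in> ball x r" "x + s *\<^sub>R ?ei \<in> ball x r"
      using that h by simp_all
    then have "f differentiable (at (x + h *\<^sub>R ?ej + s *\<^sub>R ?ei))" "f differentiable (at (x + s *\<^sub>R ?ei))"
      using df by (simp_all add: add.assoc)
    then show ?thesis
      unfolding \<phi>_def \<phi>'_def by (auto intro!: DERIV_diff has_real_derivative_along_axis)
  qed
  then obtain \<xi> where "0 < \<xi>" "\<xi> < h" "\<phi> h - \<phi> 0 = h * \<phi>' \<xi>"
    using MVT2[OF \<open>0 < h\<close>, of \<phi> \<phi>'] by auto
  moreover have "\<phi> h - \<phi> 0 = second_difference f x (h *\<^sub>R ?ei) (h *\<^sub>R ?ej)"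
    unfolding \<phi>_def second_difference_def by (simp add: add_ac)
  ultimately show ?thesis unfolding \<phi>'_def by (metis add.assoc)
qed

lemma second_difference_tendsto_pd_pd:
  fixes f :: "real^'n \<Rightarrow> real"
  assumes "open U" "x \<in> U" and df: "\<forall>y\<in>U. f differentiable (at y)"
    and di: "pd i f differentiable (at x)"
  shows "((\<lambda>h. second_difference f x (h *\<^sub>R axis i 1) (h *\<^sub>R axis j 1) / h\<^sup>2)
           \<longlongrightarrow> pd j (pd i f) x) (at_right 0)"
proof (rule tendstoI)
  fix e :: real assume e: "e > 0"
  obtain L where L: "(pd i f has_derivative L) (at x)" using di differentiable_def by blast
  have "\<forall>\<epsilon>>0. \<exists>d>0. \<forall>y. norm (y - x) < d \<longrightarrow> \<bar>pd i f y - pd i f x - L (y - x)\<bar> \<le> \<epsilon> * norm (y - x)"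
    using L unfolding has_derivative_at_alt real_norm_def by blast
  then obtain d where d: "d > 0" and
    rem: "\<And>y. norm (y - x) < d \<Longrightarrow> \<bar>pd i f y - pd i f x - L (y - x)\<bar> \<le> e / 4 * norm (y - x)"
    using e by (metis zero_less_divide_iff zero_less_numeral)
  have approx: "\<bar>pd i f (x + z) - pd i f x - L z\<bar> \<le> e / 4 * norm z" if "norm z < d" for z
    using rem[of "x + z"] that by simp
  obtain r where r: "r > 0" "ball x r \<subseteq> U" using assms(1,2) open_contains_ball by blast
  show "\<forall>\<^sub>F h in at_right 0. dist (second_difference f x (h *\<^sub>R axis i 1) (h *\<^sub>R axis j 1) / h\<^sup>2)
          (pd j (pd i f) x) < e"
    unfolding eventually_at_right_field
  proof (intro exI[of _ "min d r / 2"] conjI allI impI)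
    show "0 < min d r / 2" using d r by simp
    fix h :: real assume h: "0 < h" "h < min d r / 2"
    let ?ei = "axis i 1 :: real^'n" and ?ej = "axis j 1 :: real^'n"
    obtain \<xi> where \<xi>: "0 < \<xi>" "\<xi> < h" and mvt: "second_difference f x (h *\<^sub>R ?ei) (h *\<^sub>R ?ej)
        = h * (pd i f (x + (h *\<^sub>R ?ej + \<xi> *\<^sub>R ?ei)) - pd i f (x + \<xi> *\<^sub>R ?ei))"
      using second_difference_mvt[of x r f h i j] df r h by auto
    define z1 where "z1 = h *\<^sub>R ?ej + \<xi> *\<^sub>R ?ei"
    define z2 where "z2 = \<xi> *\<^sub>R ?ei"
    have "norm z1 \<le> h + \<xi>"
      using norm_triangle_ineq[of "h *\<^sub>R ?ej" "\<xi> *\<^sub>R ?ei"] h \<xi> by (simp add: z1_def)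
    moreover have "norm z2 = \<xi>" using \<xi> by (simp add: z2_def)
    ultimately have small: "norm z1 < d" "norm z2 < d" and "norm z1 + norm z2 < 4 * h"
      using h \<xi> by simp_all
    have "L (z1 - z2) = h * pd j (pd i f) x"
      using has_derivative_linear[OF L] pd_eq_derivative[OF L, of j]
      by (simp add: z1_def z2_def linear_scale)
    then have "\<bar>pd i f (x + z1) - pd i f (x + z2) - h * pd j (pd i f) x\<bar> \<le> e / 4 * (norm z1 + norm z2)"
      using linear_approximation_two_points[OF approx has_derivative_linear[OF L] small] by simp
    also have "\<dots> < e * h"
      using mult_strict_left_mono[OF \<open>norm z1 + norm z2 < 4 * h\<close>, of "e / 4"] e by simp
    finally have close: "\<bar>pd i f (x + z1) - pd i f (x + z2) - h * pd j (pd i f) x\<bar> < e * h" .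
    have "second_difference f x (h *\<^sub>R ?ei) (h *\<^sub>R ?ej) / h\<^sup>2 - pd j (pd i f) x
        = (pd i f (x + z1) - pd i f (x + z2) - h * pd j (pd i f) x) / h"
      using h unfolding mvt z1_def z2_def by (simp add: power2_eq_square field_simps)
    then show "dist (second_difference f x (h *\<^sub>R ?ei) (h *\<^sub>R ?ej) / h\<^sup>2) (pd j (pd i f) x) < e"
      using close h by (simp add: dist_real_def abs_divide pos_divide_less_eq)
  qed
qed

lemma pd_pd_commute:
  fixes f :: "real^'n \<Rightarrow> real"
  assumes "open U" "x \<in> U" "\<forall>y\<in>U. f differentiable (at y)"
    and "pd i f differentiable (at x)" "pd j f differentiable (at x)"
  shows "pd j (pd i f) x = pd i (pd j f) x"
  using second_difference_tendsto_pd_pd[OF assms(1-4), of j]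
    second_difference_tendsto_pd_pd[OF assms(1-3,5), of i]
  by (simp add: second_difference_commute tendsto_unique[OF trivial_limit_at_right_real])

lemma quasi_concave_midpoint:
  assumes "quasi_concave v"
  shows "min (v (x + w)) (v (x - w)) \<le> v x"
proof -
  have "(1/2::real) *\<^sub>R (x + w) + (1 - 1/2) *\<^sub>R (x - w) = x"
    by (simp add: algebra_simps scaleR_left_distrib[symmetric])
  then show ?thesis
    using assms[unfolded quasi_concave_def, rule_format, of "1/2" "x + w" "x - w"] by simp
qed

lemma critical_point_pos_second_deriv_exceeds_both_sides:
  fixes f g :: "real \<Rightarrow> real"
  assumes "R > 0" and f': "\<And>t. \<bar>t\<bar> < R \<Longrightarrow> (f has_real_derivative g t) (at t)"
    and "g 0 = 0" and g': "(g has_real_derivative l) (at 0)" and "l > 0"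
  shows "\<exists>t>0. f 0 < f t \<and> f 0 < f (- t)"
proof -
  obtain d1 where "d1 > 0" and right: "\<And>s. 0 < s \<Longrightarrow> s < d1 \<Longrightarrow> 0 < g s"
    using DERIV_pos_inc_right[OF g' \<open>l > 0\<close>] \<open>g 0 = 0\<close> by auto
  obtain d2 where "d2 > 0" and left: "\<And>s. 0 < s \<Longrightarrow> s < d2 \<Longrightarrow> g (- s) < 0"
    using DERIV_pos_inc_left[OF g' \<open>l > 0\<close>] \<open>g 0 = 0\<close> by auto
  define t where "t = min R (min d1 d2) / 2"
  have t: "0 < t" "t < R" "t < d1" "t < d2"
    using \<open>R > 0\<close> \<open>d1 > 0\<close> \<open>d2 > 0\<close> by (auto simp: t_def)
  obtain z1 where "0 < z1" "z1 < t" "f t - f 0 = t * g z1"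
    using MVT2[of 0 t f g] f' t by auto
  moreover obtain z2 where "- t < z2" "z2 < 0" "f 0 - f (- t) = t * g z2"
    using MVT2[of "- t" 0 f g] f' t by auto
  moreover have "0 < t * g z1" "t * g z2 < 0"
    using right[of z1] left[of "- z2"] calculation t by (auto simp: mult_pos_neg)
  ultimately show ?thesis
    using t by (intro exI[of _ t]) auto
qed

lemma hess_mult_vec_component: "(hess f x *v w) $ i = grad (pd i f) x \<bullet> w"
  by (simp add: matrix_vector_mul_component hess_def grad_def)

lemma quasi_concave_hessian_nonpos_on_tangent:
  fixes v :: "real^'n \<Rightarrow> real"
  assumes qc: "quasi_concave v" and "open U" "x \<in> U"
    and dv: "\<forall>y\<in>U. v differentiable (at y)" and dpv: "\<forall>i. pd i v differentiable (at x)"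
    and tangent: "grad v x \<bullet> w = 0"
  shows "w \<bullet> (hess v x *v w) \<le> 0"
proof (rule ccontr)
  assume "\<not> ?thesis"
  then have pos: "w \<bullet> (hess v x *v w) > 0" by simp
  obtain r where "r > 0" "ball x r \<subseteq> U" using \<open>open U\<close> \<open>x \<in> U\<close> open_contains_ball by blast
  define R where "R = r / (norm w + 1)"
  have "R > 0" using \<open>r > 0\<close> by (simp add: R_def add_nonneg_pos)
  have line_in_U: "x + t *\<^sub>R w \<in> U" if "\<bar>t\<bar> < R" for t
  proof -
    have "\<bar>t\<bar> * norm w \<le> \<bar>t\<bar> * (norm w + 1)" by (simp add: mult_left_mono)
    also have "\<dots> < r"
      using that pos_less_divide_eq[of "norm w + 1" "\<bar>t\<bar>" r] by (simp add: R_def add_nonneg_pos)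
    finally show ?thesis
      using \<open>ball x r \<subseteq> U\<close> by (auto simp: dist_norm norm_minus_commute)
  qed
  define g where "g t = grad v (x + t *\<^sub>R w) \<bullet> w" for t
  have v': "((\<lambda>t. v (x + t *\<^sub>R w)) has_real_derivative g t) (at t)" if "\<bar>t\<bar> < R" for t
    unfolding g_def using dv line_in_U[OF that] by (simp add: has_real_derivative_along_line_grad)
  have "g 0 = 0" using tangent by (simp add: g_def)
  have g': "(g has_real_derivative w \<bullet> (hess v x *v w)) (at 0)"
  proof -
    have "g = (\<lambda>t. \<Sum>i\<in>UNIV. w$i * pd i v (x + t *\<^sub>R w))"
      by (simp add: g_def grad_def inner_vec_def mult.commute fun_eq_iff)
    moreover have "((\<lambda>t. pd i v (x + t *\<^sub>R w)) has_real_derivative (hess v x *v w) $ i) (at 0)" for i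
      using has_real_derivative_along_line_grad[of "pd i v" x 0 w] dpv
      by (simp add: hess_mult_vec_component)
    ultimately show ?thesis
      unfolding inner_vec_def[of w] inner_real_def by (simp only:) (intro DERIV_sum DERIV_cmult)
  qed
  obtain t where "t > 0" "v x < v (x + t *\<^sub>R w)" "v x < v (x + (- t) *\<^sub>R w)"
    using critical_point_pos_second_deriv_exceeds_both_sides[OF \<open>R > 0\<close> v' \<open>g 0 = 0\<close> g' pos]
    by auto
  then show False
    using quasi_concave_midpoint[OF qc, of x "t *\<^sub>R w"] by simp
qed

lemma symmetric_matrix_inner_swap:
  fixes A :: "real^'n^'n"
  assumes "transpose A = A"
  shows "u \<bullet> (A *v z) = (A *v u) \<bullet> z"
  by (metis assms dot_lmul_matrix transpose_matrix_vector)

lemma nonpos_binary_quadratic_form_discriminant: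
  fixes a b c :: real
  assumes nonpos: "\<And>\<alpha> \<beta>. \<alpha>\<^sup>2 * a + 2 * \<alpha> * \<beta> * b + \<beta>\<^sup>2 * c \<le> 0"
  shows "b\<^sup>2 \<le> a * c"
proof (cases "a = 0")
  case True
  have "b = 0"
  proof (rule ccontr)
    assume "b \<noteq> 0"
    then show False
      using nonpos[of "(1 - c) / (2 * b)" 1] True by (simp add: field_simps)
  qed
  then show ?thesis using True by simp
next
  case False
  then have "a < 0" using nonpos[of 1 0] by simp
  have "b\<^sup>2 * a + 2 * b * (- a) * b + (- a)\<^sup>2 * c \<le> 0" by (rule nonpos)
  then have "a * (a * c - b\<^sup>2) \<le> 0" by (simp add: power2_eq_square algebra_simps)
  then show ?thesis using \<open>a < 0\<close> by (simp add: mult_le_0_iff)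
qed

lemma neg_semidef_on_hyperplane_cauchy_schwarz:
  fixes A :: "real^'n^'n"
  assumes sym: "transpose A = A"
    and nsd: "\<And>w. p \<bullet> w = 0 \<Longrightarrow> w \<bullet> (A *v w) \<le> 0"
    and "p \<bullet> u = 0" "p \<bullet> z = 0"
  shows "(u \<bullet> (A *v z))\<^sup>2 \<le> (u \<bullet> (A *v u)) * (z \<bullet> (A *v z))"
proof (rule nonpos_binary_quadratic_form_discriminant)
  fix \<alpha> \<beta> :: real
  have "p \<bullet> (\<alpha> *\<^sub>R u + \<beta> *\<^sub>R z) = 0" using assms(3,4) by (simp add: inner_add_right)
  then have "(\<alpha> *\<^sub>R u + \<beta> *\<^sub>R z) \<bullet> (A *v (\<alpha> *\<^sub>R u + \<beta> *\<^sub>R z)) \<le> 0" by (rule nsd)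
  then show "\<alpha>\<^sup>2 * (u \<bullet> (A *v u)) + 2 * \<alpha> * \<beta> * (u \<bullet> (A *v z)) + \<beta>\<^sup>2 * (z \<bullet> (A *v z)) \<le> 0"
    using symmetric_matrix_inner_swap[OF sym, of z u]
    by (simp add: matrix_vector_right_distrib matrix_vector_mult_scaleR inner_add_left inner_add_right
        inner_commute[of "A *v z" u] power2_eq_square algebra_simps)
qed

lemma double_sum_squares_le_trace_squared:
  fixes M :: "'a \<Rightarrow> 'a \<Rightarrow> real"
  assumes "\<And>i j. (M i j)\<^sup>2 \<le> M i i * M j j"
  shows "(\<Sum>i\<in>I. \<Sum>j\<in>I. (M i j)\<^sup>2) \<le> (\<Sum>i\<in>I. M i i)\<^sup>2"
proof -
  have "(\<Sum>i\<in>I. \<Sum>j\<in>I. (M i j)\<^sup>2) \<le> (\<Sum>i\<in>I. \<Sum>j\<in>I. M i i * M j j)"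
    by (intro sum_mono assms)
  also have "\<dots> = (\<Sum>i\<in>I. M i i)\<^sup>2"
    by (simp add: power2_eq_square sum_product)
  finally show ?thesis .
qed

text \<open>The columns of \<open>|p|\<^sup>2 I - p p\<^sup>T\<close>, i.e. the scaled orthogonal projections of the unit vectors
  onto the hyperplane \<open>p\<^sup>\<bottom>\<close>.\<close>
definition hyperplane_frame :: "real^'n \<Rightarrow> 'n \<Rightarrow> real^'n" where
  "hyperplane_frame p j = (p \<bullet> p) *\<^sub>R axis j 1 - p$j *\<^sub>R p"

lemma inner_hyperplane_frame: "p \<bullet> hyperplane_frame p j = 0"
  by (simp add: hyperplane_frame_def inner_diff_right inner_axis mult.commute)

lemma sum_squares_inner_hyperplane_frame:
  "(\<Sum>j\<in>UNIV. (y \<bullet> hyperplane_frame p j)\<^sup>2) = (p \<bullet> p)\<^sup>2 * (y \<bullet> y) - (p \<bullet> p) * (y \<bullet> p)\<^sup>2"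
proof -
  define z where "z = (p \<bullet> p) *\<^sub>R y - (y \<bullet> p) *\<^sub>R p"
  have "y \<bullet> hyperplane_frame p j = z $ j" for j
    by (simp add: hyperplane_frame_def z_def inner_diff_right inner_axis inner_commute[of y p] mult.commute)
  then have "(\<Sum>j\<in>UNIV. (y \<bullet> hyperplane_frame p j)\<^sup>2) = z \<bullet> z"
    by (simp add: inner_vec_def power2_eq_square)
  also have "\<dots> = (p \<bullet> p)\<^sup>2 * (y \<bullet> y) - (p \<bullet> p) * (y \<bullet> p)\<^sup>2"
    by (simp add: z_def inner_commute[of p y] power2_eq_square algebra_simps)
  finally show ?thesis .
qed

lemma trace_hyperplane_compression:
  fixes A :: "real^'n^'n" and p :: "real^'n"
  assumes sym: "transpose A = A"
  defines "s \<equiv> p \<bullet> p"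
  shows "(\<Sum>i\<in>UNIV. hyperplane_frame p i \<bullet> (A *v hyperplane_frame p i))
           = s\<^sup>2 * trace A - s * ((A *v p) \<bullet> p)"
proof -
  define q c where "q = A *v p" and "c = q \<bullet> p"
  have "hyperplane_frame p i \<bullet> (A *v hyperplane_frame p i)
      = s\<^sup>2 * A$i$i - 2 * s * (p$i * q$i) + c * (p$i * p$i)" for i
    using symmetric_matrix_inner_swap[OF sym, of p "axis i 1"]
    by (simp add: hyperplane_frame_def s_def matrix_vector_mult_diff_distrib matrix_vector_mult_scaleR
        inner_diff_left inner_diff_right inner_axis inner_axis' matrix_vector_mul_component
        q_def[symmetric] c_def inner_commute[of p q] power2_eq_square algebra_simps)
  then have "(\<Sum>i\<in>UNIV. hyperplane_frame p i \<bullet> (A *v hyperplane_frame p i))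
      = s\<^sup>2 * trace A - 2 * s * (\<Sum>i\<in>UNIV. p$i * q$i) + c * (\<Sum>i\<in>UNIV. p$i * p$i)"
    by (simp add: sum.distrib sum_subtractf sum_distrib_left trace_def)
  moreover have "(\<Sum>i\<in>UNIV. p$i * q$i) = c" "(\<Sum>i\<in>UNIV. p$i * p$i) = s"
    by (simp_all add: c_def s_def inner_vec_def mult.commute)
  ultimately show ?thesis by (simp add: c_def q_def power2_eq_square algebra_simps)
qed

lemma frob_hyperplane_compression:
  fixes A :: "real^'n^'n" and p :: "real^'n"
  assumes sym: "transpose A = A"
  defines "s \<equiv> p \<bullet> p"
  shows "(\<Sum>i\<in>UNIV. \<Sum>j\<in>UNIV. (hyperplane_frame p i \<bullet> (A *v hyperplane_frame p j))\<^sup>2)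
           = s^4 * frob_norm_sq A - 2 * s^3 * (norm (A *v p))\<^sup>2 + s\<^sup>2 * ((A *v p) \<bullet> p)\<^sup>2"
proof -
  define q W where "q = A *v p" and "W = hyperplane_frame p"
  have frame: "(\<Sum>j\<in>UNIV. (y \<bullet> W j)\<^sup>2) = s\<^sup>2 * (y \<bullet> y) - s * (y \<bullet> p)\<^sup>2" for y
    unfolding W_def s_def by (rule sum_squares_inner_hyperplane_frame)
  have swap: "u \<bullet> (A *v z) = (A *v u) \<bullet> z" for u z
    by (rule symmetric_matrix_inner_swap[OF sym])
  have "(A *v W i) \<bullet> p = q \<bullet> W i" for i
    unfolding q_def by (metis swap inner_commute)
  then have row: "(\<Sum>j\<in>UNIV. (W i \<bullet> (A *v W j))\<^sup>2) = s\<^sup>2 * ((A *v W i) \<bullet> (A *v W i)) - s * (q \<bullet> W i)\<^sup>2" for i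
    by (simp only: swap frame)
  have "(\<Sum>i\<in>UNIV. (A *v W i) \<bullet> (A *v W i)) = (\<Sum>i\<in>UNIV. \<Sum>k\<in>UNIV. (A$k \<bullet> W i)\<^sup>2)"
    by (simp add: inner_vec_def matrix_vector_mul_component power2_eq_square)
  also have "\<dots> = (\<Sum>k\<in>UNIV. \<Sum>i\<in>UNIV. (A$k \<bullet> W i)\<^sup>2)"
    by (rule sum.swap)
  also have "\<dots> = (\<Sum>k\<in>UNIV. s\<^sup>2 * (A$k \<bullet> A$k) - s * (q$k)\<^sup>2)"
    by (simp add: frame q_def matrix_vector_mul_component)
  also have "\<dots> = s\<^sup>2 * frob_norm_sq A - s * (q \<bullet> q)"
    by (simp add: sum_subtractf sum_distrib_left frob_norm_sq_def inner_vec_def power2_eq_square)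
  finally have AW: "(\<Sum>i\<in>UNIV. (A *v W i) \<bullet> (A *v W i)) = s\<^sup>2 * frob_norm_sq A - s * (q \<bullet> q)" .
  have qW: "(\<Sum>i\<in>UNIV. (q \<bullet> W i)\<^sup>2) = s\<^sup>2 * (q \<bullet> q) - s * (q \<bullet> p)\<^sup>2"
    by (rule frame)
  have "(\<Sum>i\<in>UNIV. \<Sum>j\<in>UNIV. (W i \<bullet> (A *v W j))\<^sup>2)
      = s\<^sup>2 * (\<Sum>i\<in>UNIV. (A *v W i) \<bullet> (A *v W i)) - s * (\<Sum>i\<in>UNIV. (q \<bullet> W i)\<^sup>2)"
    by (simp add: row sum_subtractf sum_distrib_left)
  then show ?thesis
    unfolding AW qW W_def[symmetric] q_def[symmetric] power2_norm_eq_inner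
    by (simp add: power2_eq_square power3_eq_cube power4_eq_xxxx algebra_simps)
qed

lemma trace_frob_inequality_of_neg_semidef_on_hyperplane:
  fixes A :: "real^'n^'n" and p :: "real^'n"
  assumes sym: "transpose A = A"
    and nsd: "\<And>w. p \<bullet> w = 0 \<Longrightarrow> w \<bullet> (A *v w) \<le> 0"
  shows "(norm p)\<^sup>2 * (frob_norm_sq A - (trace A)\<^sup>2)
           \<le> 2 * ((norm (A *v p))\<^sup>2 - trace A * ((A *v p) \<bullet> p))"
proof -
  define s N c t F where "s = p \<bullet> p" and "N = (norm (A *v p))\<^sup>2" and "c = (A *v p) \<bullet> p"
    and "t = trace A" and "F = frob_norm_sq A"
  define M where "M i j = hyperplane_frame p i \<bullet> (A *v hyperplane_frame p j)" for i j
  have "(M i j)\<^sup>2 \<le> M i i * M j j" for i j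
    unfolding M_def
    by (rule neg_semidef_on_hyperplane_cauchy_schwarz[OF sym nsd inner_hyperplane_frame inner_hyperplane_frame])
  then have "(\<Sum>i\<in>UNIV. \<Sum>j\<in>UNIV. (M i j)\<^sup>2) \<le> (\<Sum>i\<in>UNIV. M i i)\<^sup>2"
    by (rule double_sum_squares_le_trace_squared)
  then have "s^4 * F - 2 * s^3 * N + s\<^sup>2 * c\<^sup>2 \<le> (s\<^sup>2 * t - s * c)\<^sup>2"
    unfolding M_def frob_hyperplane_compression[OF sym] trace_hyperplane_compression[OF sym]
    by (simp add: s_def N_def c_def t_def F_def)
  then have key: "s^3 * (s * (F - t\<^sup>2) - 2 * (N - t * c)) \<le> 0"
    by (simp add: power2_eq_square power3_eq_cube power4_eq_xxxx algebra_simps)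
  show ?thesis
  proof (cases "p = 0")
    case False
    then have "s^3 > 0" by (simp add: s_def)
    with key have "s * (F - t\<^sup>2) \<le> 2 * (N - t * c)" by (simp add: mult_le_0_iff)
    then show ?thesis
      by (simp add: s_def N_def c_def t_def F_def power2_norm_eq_inner)
  qed simp
qed

theorem lemma6p1:
  fixes v :: "real^'n \<Rightarrow> real" and U :: "(real^'n) set"
  assumes "CARD('n) \<ge> 2"
    and "continuous_on UNIV v"
    and "quasi_concave v"
    and "open U" and "connected U" and "U \<noteq> {}"
    and "smooth_on U v"
    and "x \<in> U"
  shows "2 * ((norm (hess v x *v grad v x))\<^sup>2 - laplacian v x * inf_laplacian v x)
         \<ge> (norm (grad v x))\<^sup>2 * (frob_norm_sq (hess v x) - (laplacian v x)\<^sup>2)"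
proof -
  have "Ck_on 2 U v" using \<open>smooth_on U v\<close> unfolding smooth_on_def by blast
  then have "v differentiable_on U" "\<And>i. pd i v differentiable_on U"
    by (simp_all add: numeral_2_eq_2)
  then have dv: "\<forall>y\<in>U. v differentiable (at y)" and dpv: "\<forall>i. pd i v differentiable (at x)"
    using \<open>open U\<close> \<open>x \<in> U\<close> by (simp_all add: differentiable_on_eq_differentiable_at)
  have "transpose (hess v x) = hess v x"
    using pd_pd_commute[OF \<open>open U\<close> \<open>x \<in> U\<close> dv] dpv
    by (simp add: transpose_def hess_def vec_eq_iff)
  moreover have "w \<bullet> (hess v x *v w) \<le> 0" if "grad v x \<bullet> w = 0" for w
    using quasi_concave_hessian_nonpos_on_tangent[OF \<open>quasi_concave v\<close> \<open>open U\<close> \<open>x \<in> U\<close> dv dpv that] .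
  ultimately show ?thesis
    using trace_frob_inequality_of_neg_semidef_on_hyperplane[of "hess v x" "grad v x"]
    unfolding laplacian_def inf_laplacian_def trace_def by simp
qed

end
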